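(* Let $X_1,\ldots,X_n$ be independent real random variables, let $\sigma>0$ and $w>0$, and assume that each $X_i/\sigma$ has a continuous density bounded above by $w$. Let $S=\sum_{i=1}^nX_i^2$. Then for every $x>0$, $$\mathbb{P}(S\leq\sigma^2x)\leq\exp\Big[\frac n2\Big\{1+\log(2\pi w^2)-\log\Big(\frac nx\Big)\Big\}\Big].$$ *)

theory Defs
  imports "HOL-Probability.Probability"
begin

end

theory Submission
  imports Defs
begin

text \<open>Chernoff's method for the lower tail: for every \<open>s > 0\<close>,
  \<open>P(S \<le> \<sigma>\<^sup>2 x) \<le> e\<^bsup>s x\<^esup> \<Prod>\<^sub>i E e\<^bsup>-s (X\<^sub>i/\<sigma>)\<^sup>2\<^esup>\<close> by independence, and a density bounded by \<open>w\<close>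
  gives \<open>E e\<^bsup>-s (X\<^sub>i/\<sigma>)\<^sup>2\<^esup> \<le> w \<integral> e\<^bsup>-s y\<^sup>2\<^esup> dy = w \<surd>(\<pi>/s)\<close>. The choice \<open>s = n/(2x)\<close>
  minimises \<open>s x + (n/2) log (\<pi>/s)\<close> and yields the stated bound.\<close>

lemma (in prob_space) Chernoff_ineq_sum_indep_le:
  assumes "finite I" and indep: "indep_vars (\<lambda>_. borel) Y I" and "s > 0"
  shows "emeasure M {\<omega> \<in> space M. (\<Sum>i\<in>I. Y i \<omega>) \<le> a}
           \<le> ennreal (exp (s * a)) * (\<Prod>i\<in>I. \<integral>\<^sup>+\<omega>. ennreal (exp (- s * Y i \<omega>)) \<partial>M)"
proof -
  have [measurable]: "Y i \<in> borel_measurable M" if "i \<in> I" for i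
    using indep that unfolding indep_vars_def by auto
  have "emeasure M {\<omega> \<in> space M. (\<Sum>i\<in>I. Y i \<omega>) \<le> a}
          \<le> ennreal (exp (s * a))
            * (\<integral>\<^sup>+\<omega>. ennreal (exp (- s * (\<Sum>i\<in>I. Y i \<omega>))) * indicator (space M) \<omega> \<partial>M)"
    using \<open>s > 0\<close> by (intro Chernoff_ineq_nn_integral_le) auto
  also have "(\<integral>\<^sup>+\<omega>. ennreal (exp (- s * (\<Sum>i\<in>I. Y i \<omega>))) * indicator (space M) \<omega> \<partial>M)
               = (\<integral>\<^sup>+\<omega>. (\<Prod>i\<in>I. ennreal (exp (- s * Y i \<omega>))) \<partial>M)"
    by (intro nn_integral_cong) (simp add: sum_distrib_left exp_sum \<open>finite I\<close> prod_ennreal)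
  also have "\<dots> = (\<Prod>i\<in>I. \<integral>\<^sup>+\<omega>. ennreal (exp (- s * Y i \<omega>)) \<partial>M)"
    by (intro indep_vars_nn_integral \<open>finite I\<close> indep_vars_compose2[OF indep]) auto
  finally show ?thesis .
qed

lemma nn_integral_distributed_le_density_bound:
  assumes distr: "distributed M N Y g" and bound: "\<And>y. y \<in> space N \<Longrightarrow> g y \<le> c"
    and [measurable]: "f \<in> borel_measurable N"
  shows "(\<integral>\<^sup>+\<omega>. f (Y \<omega>) \<partial>M) \<le> c * (\<integral>\<^sup>+y. f y \<partial>N)"
proof -
  have "(\<integral>\<^sup>+\<omega>. f (Y \<omega>) \<partial>M) = (\<integral>\<^sup>+y. g y * f y \<partial>N)"
    using distributed_nn_integral[OF distr] by simp
  also have "\<dots> \<le> (\<integral>\<^sup>+y. c * f y \<partial>N)"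
    by (intro nn_integral_mono mult_right_mono bound) simp_all
  also have "\<dots> = c * (\<integral>\<^sup>+y. f y \<partial>N)"
    by (rule nn_integral_cmult) simp
  finally show ?thesis .
qed

lemma nn_integral_gaussian:
  fixes s :: real
  assumes "s > 0"
  shows "(\<integral>\<^sup>+y. ennreal (exp (- s * y\<^sup>2)) \<partial>lborel) = ennreal (sqrt (pi / s))"
proof -
  define \<tau> where "\<tau> = sqrt (1 / (2 * s))"
  have "\<tau> > 0" and \<tau>2: "\<tau>\<^sup>2 = 1 / (2 * s)"
    using \<open>s > 0\<close> by (simp_all add: \<tau>_def)
  have "exp (- s * y\<^sup>2) = sqrt (pi / s) * normal_density 0 \<tau> y" for y
    using \<open>s > 0\<close> by (simp add: normal_density_def \<tau>2 real_sqrt_divide)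
  then have "(\<integral>\<^sup>+y. ennreal (exp (- s * y\<^sup>2)) \<partial>lborel)
               = (\<integral>\<^sup>+y. ennreal (sqrt (pi / s)) * ennreal (normal_density 0 \<tau> y) \<partial>lborel)"
    using \<open>s > 0\<close> by (simp add: ennreal_mult)
  also have "\<dots> = ennreal (sqrt (pi / s)) * (\<integral>\<^sup>+y. ennreal (normal_density 0 \<tau> y) \<partial>lborel)"
    by (rule nn_integral_cmult) simp
  also have "(\<integral>\<^sup>+y. ennreal (normal_density 0 \<tau> y) \<partial>lborel) = 1"
    using nn_integral_eq_integral[of lborel "normal_density 0 \<tau>"] \<open>\<tau> > 0\<close> by simp
  finally show ?thesis by simp
qed

lemma nn_integral_exp_neg_square_le_density_bound:
  fixes s w :: real
  assumes distr: "distributed M lborel Y (\<lambda>y. ennreal (g y))" and "\<And>y. g y \<le> w" and "s > 0"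
  shows "(\<integral>\<^sup>+\<omega>. ennreal (exp (- s * (Y \<omega>)\<^sup>2)) \<partial>M) \<le> ennreal (w * sqrt (pi / s))"
proof -
  have "(\<integral>\<^sup>+\<omega>. ennreal (exp (- s * (Y \<omega>)\<^sup>2)) \<partial>M)
          \<le> ennreal w * (\<integral>\<^sup>+y. ennreal (exp (- s * y\<^sup>2)) \<partial>lborel)"
    using assms by (intro nn_integral_distributed_le_density_bound[OF distr] ennreal_leI) simp_all
  also have "\<dots> = ennreal (w * sqrt (pi / s))"
    unfolding nn_integral_gaussian[OF \<open>s > 0\<close>] by (rule ennreal_mult''[symmetric]) (use \<open>s > 0\<close> in simp)
  finally show ?thesis .
qed

lemma exp_mult_power_sqrt_optimum:
  fixes n :: nat and w x :: real
  assumes "n > 0" and "w > 0" and "x > 0"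
  defines "s \<equiv> real n / (2 * x)"
  shows "exp (s * x) * (w * sqrt (pi / s)) ^ n
           = exp (real n / 2 * (1 + ln (2 * pi * w\<^sup>2) - ln (real n / x)))"
proof -
  have sx: "s * x = real n / 2"
    using assms by (simp add: s_def)
  have pow: "(w * sqrt (pi / s)) ^ n = exp (real n * ln (w * sqrt (pi / s)))"
    using assms by (simp add: s_def exp_of_nat_mult)
  have ln2: "2 * ln (w * sqrt (pi / s)) = ln (2 * pi * w\<^sup>2) - ln (real n / x)"
    using assms by (simp add: s_def ln_mult ln_div ln_sqrt ln_realpow field_simps)
  have "exp (s * x) * (w * sqrt (pi / s)) ^ n
          = exp (real n / 2 * (1 + 2 * ln (w * sqrt (pi / s))))"
    unfolding sx pow by (simp add: exp_add[symmetric] algebra_simps)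
  then show ?thesis
    unfolding ln2 by (simp add: algebra_simps)
qed

lemma (in prob_space) emeasure_sum_squares_le_density_bound:
  fixes s w :: real
  assumes "finite I" and indep: "indep_vars (\<lambda>_. borel) Y I" and "s > 0" and "w \<ge> 0"
    and dens: "\<And>i. i \<in> I \<Longrightarrow>
      \<exists>g. (\<forall>y. g y \<le> w) \<and> distributed M lborel (Y i) (\<lambda>y. ennreal (g y))"
  shows "emeasure M {\<omega> \<in> space M. (\<Sum>i\<in>I. (Y i \<omega>)\<^sup>2) \<le> a}
           \<le> ennreal (exp (s * a) * (w * sqrt (pi / s)) ^ card I)"
proof -
  have "indep_vars (\<lambda>_. borel) (\<lambda>i \<omega>. (Y i \<omega>)\<^sup>2) I"
    by (rule indep_vars_compose2[OF indep]) simp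
  then have "emeasure M {\<omega> \<in> space M. (\<Sum>i\<in>I. (Y i \<omega>)\<^sup>2) \<le> a}
               \<le> ennreal (exp (s * a)) * (\<Prod>i\<in>I. \<integral>\<^sup>+\<omega>. ennreal (exp (- s * (Y i \<omega>)\<^sup>2)) \<partial>M)"
    by (rule Chernoff_ineq_sum_indep_le[OF \<open>finite I\<close> _ \<open>s > 0\<close>])
  also have "\<dots> \<le> ennreal (exp (s * a)) * (\<Prod>i\<in>I. ennreal (w * sqrt (pi / s)))"
  proof (intro mult_left_mono prod_mono_ennreal)
    fix i assume "i \<in> I"
    then obtain g where "\<forall>y. g y \<le> w" and "distributed M lborel (Y i) (\<lambda>y. ennreal (g y))"
      using dens by blast
    then show "(\<integral>\<^sup>+\<omega>. ennreal (exp (- s * (Y i \<omega>)\<^sup>2)) \<partial>M) \<le> ennreal (w * sqrt (pi / s))"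
      using \<open>s > 0\<close> by (intro nn_integral_exp_neg_square_le_density_bound) auto
  qed simp
  also have "\<dots> = ennreal (exp (s * a) * (w * sqrt (pi / s)) ^ card I)"
    using \<open>w \<ge> 0\<close> \<open>s > 0\<close> by (simp add: ennreal_mult ennreal_power[symmetric])
  finally show ?thesis .
qed

theorem lemma1:
  fixes M :: "'a measure" and X :: "nat \<Rightarrow> 'a \<Rightarrow> real"
    and n :: nat and \<sigma> w x :: real
  assumes "prob_space M"
    and "prob_space.indep_vars M (\<lambda>_. borel) X {..<n}"
    and "\<sigma> > 0" and "w > 0"
    and "\<forall>i<n. \<exists>g :: real \<Rightarrow> real. continuous_on UNIV g \<and> (\<forall>t. 0 \<le> g t \<and> g t \<le> w)
              \<and> distributed M lborel (\<lambda>\<omega>. X i \<omega> / \<sigma>) (\<lambda>t. ennreal (g t))"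
    and "x > 0"
  shows "measure M {\<omega> \<in> space M. (\<Sum>i<n. (X i \<omega>)\<^sup>2) \<le> \<sigma>\<^sup>2 * x}
           \<le> exp (real n / 2 * (1 + ln (2 * pi * w\<^sup>2) - ln (real n / x)))"
proof (cases "n = 0")
  case False
  interpret prob_space M by fact
  define s where "s = real n / (2 * x)"
  have "s > 0"
    using False \<open>x > 0\<close> by (simp add: s_def)
  have event: "{\<omega> \<in> space M. (\<Sum>i<n. (X i \<omega>)\<^sup>2) \<le> \<sigma>\<^sup>2 * x}
                 = {\<omega> \<in> space M. (\<Sum>i<n. (X i \<omega> / \<sigma>)\<^sup>2) \<le> x}"
    using \<open>\<sigma> > 0\<close> by (simp add: power_divide pos_divide_le_eq mult.commute flip: sum_divide_distrib)
  have "indep_vars (\<lambda>_. borel) (\<lambda>i \<omega>. X i \<omega> / \<sigma>) {..<n}"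
    by (rule indep_vars_compose2[OF assms(2)]) simp
  moreover have "\<exists>g. (\<forall>y. g y \<le> w) \<and> distributed M lborel (\<lambda>\<omega>. X i \<omega> / \<sigma>) (\<lambda>y. ennreal (g y))"
    if "i \<in> {..<n}" for i
    using assms(5) that by blast
  ultimately have "emeasure M {\<omega> \<in> space M. (\<Sum>i<n. (X i \<omega> / \<sigma>)\<^sup>2) \<le> x}
                    \<le> ennreal (exp (s * x) * (w * sqrt (pi / s)) ^ n)"
    using \<open>s > 0\<close> \<open>w > 0\<close> emeasure_sum_squares_le_density_bound[of "{..<n}"] by simp
  also have "exp (s * x) * (w * sqrt (pi / s)) ^ n
               = exp (real n / 2 * (1 + ln (2 * pi * w\<^sup>2) - ln (real n / x)))"
    unfolding s_def using False \<open>w > 0\<close> \<open>x > 0\<close> by (intro exp_mult_power_sqrt_optimum) auto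
  finally show ?thesis
    unfolding event by (simp add: emeasure_eq_measure)
qed (simp add: prob_space.prob_le_1[OF assms(1)])

end
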